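(* Define, for $n'\in\mathbb{N}_+$ and $n\in\{0,\dots,n'\}$, $\gamma_{n,n'}=\Big(\sum_{j=0}^{n}\binom{n'}{j}\Big){\rm e}_{n'}$. Then the collection $(\gamma_{n,n'})_{n'\in\mathbb{N}_+,n\in\{0,\dots,n'\}}$ belongs to $\Gamma$ (i.e. satisfies the bound condition).
   Context: $\sigma(x)=\max(0,x)$; $\mathrm{RL}(n,n')$ ($n,n'\in\mathbb{N}_+$) is the set of maps $h:\mathbb{R}^n\to\mathbb{R}^{n'}$, $h(x)_i=\sigma(\langle x,w_i\rangle+b_i)$ for some $W\in\mathbb{R}^{n'\times n}$ with rows $w_i$, $b\in\mathbb{R}^{n'}$; convention: $\mathrm{RL}(0,n')$ are constant maps $\{0\}\to\mathbb{R}^{n'}$ with $\mathcal{H}_{n'}(\mathcal{S}_h)={\rm e}_0$. $S_h(x)_i=1$ iff $\langle x,w_i\rangle+b_i>0$ else $0$; $\mathcal{S}_h=\{S_h(x):x\in\mathbb{R}^n\}$; $|s|=\sum_is_i$. $V$: sequences $(v_j)_{j\in\mathbb{N}}$ of nonnegative integers with finite sum; ${\rm e}_i$ has $({\rm e}_i)_j=\delta_{ij}$; $v\preceq w$ iff $\sum_{j\ge J}v_j\le\sum_{j\ge J}w_j$ for all $J\in\mathbb{N}$; for finite families, $\max_i(v^{(i)})_J=\max_i\sum_{j\ge J}v^{(i)}_j-\max_i\sum_{j\ge J+1}v^{(i)}_j$. $\mathcal{H}_{n'}(\mathcal{S})=(|\{s\in\mathcal{S}:|s|=j\}|)_j$.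 $\Gamma$ (bound condition): families $(\gamma_{n,n'})_{n'\in\mathbb{N}_+,n\in\{0,\dots,n'\}}$ in $V$ with (i) $\max\{\mathcal{H}_{n'}(\mathcal{S}_h):h\in\mathrm{RL}(n,n')\}\preceq\gamma_{n,n'}$ for all $n'\in\mathbb{N}_+$, $n\in\{0,\dots,n'\}$, and (ii) $n\le\tilde n\le n'\Rightarrow\gamma_{n,n'}\preceq\gamma_{\tilde n,n'}$. *)

theory Defs
  imports Complex_Main
begin

text \<open>Vectors in R^n are modelled as functions nat => real that vanish at indices >= n.
  Elements of V are sequences nat => nat with finite support.\<close>

definition inV :: "(nat \<Rightarrow> nat) \<Rightarrow> bool" where
  "inV v \<longleftrightarrow> finite {j. v j \<noteq> 0}"

definition unitV :: "nat \<Rightarrow> nat \<Rightarrow> nat" where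
  "unitV i = (\<lambda>j. if j = i then 1 else 0)"

definition tailV :: "(nat \<Rightarrow> nat) \<Rightarrow> nat \<Rightarrow> nat" where
  "tailV v J = (\<Sum>j\<in>{j. J \<le> j \<and> v j \<noteq> 0}. v j)"

definition precV :: "(nat \<Rightarrow> nat) \<Rightarrow> (nat \<Rightarrow> nat) \<Rightarrow> bool" where
  "precV v w \<longleftrightarrow> (\<forall>J. tailV v J \<le> tailV w J)"

text \<open>Maximum of a finite (nonempty) family of elements of V.\<close>
definition maxV :: "(nat \<Rightarrow> nat) set \<Rightarrow> nat \<Rightarrow> nat" where
  "maxV F = (\<lambda>J. Max ((\<lambda>v. tailV v J) ` F) - Max ((\<lambda>v. tailV v (Suc J)) ` F))"

definition relu_layer :: "nat \<Rightarrow> nat \<Rightarrow> (nat \<Rightarrow> nat \<Rightarrow> real) \<Rightarrow> (nat \<Rightarrow> real)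
    \<Rightarrow> (nat \<Rightarrow> real) \<Rightarrow> (nat \<Rightarrow> real)" where
  "relu_layer n n' W b = (\<lambda>x i. if i < n' then max 0 ((\<Sum>k<n. x k * W i k) + b i) else 0)"

definition RL :: "nat \<Rightarrow> nat \<Rightarrow> ((nat \<Rightarrow> real) \<Rightarrow> (nat \<Rightarrow> real)) set" where
  "RL n n' = {relu_layer n n' W b | W b. True}"

definition act_pattern :: "nat \<Rightarrow> ((nat \<Rightarrow> real) \<Rightarrow> (nat \<Rightarrow> real)) \<Rightarrow> (nat \<Rightarrow> real) \<Rightarrow> nat \<Rightarrow> nat" where
  "act_pattern n' h x = (\<lambda>i. if i < n' \<and> h x i > 0 then 1 else 0)"

definition act_patterns :: "nat \<Rightarrow> nat \<Rightarrow> ((nat \<Rightarrow> real) \<Rightarrow> (nat \<Rightarrow> real)) \<Rightarrow> (nat \<Rightarrow> nat) set" where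
  "act_patterns n n' h = {act_pattern n' h x | x. \<forall>k\<ge>n. x k = 0}"

definition histo :: "nat \<Rightarrow> (nat \<Rightarrow> nat) set \<Rightarrow> nat \<Rightarrow> nat" where
  "histo n' S = (\<lambda>j. card {s\<in>S. (\<Sum>i<n'. s i) = j})"

definition histos :: "nat \<Rightarrow> nat \<Rightarrow> (nat \<Rightarrow> nat) set" where
  "histos n n' = (if n = 0 then {unitV 0} else {histo n' (act_patterns n n' h) | h. h \<in> RL n n'})"

definition in_Gamma :: "(nat \<Rightarrow> nat \<Rightarrow> nat \<Rightarrow> nat) \<Rightarrow> bool" where
  "in_Gamma \<gamma> \<longleftrightarrow>
     (\<forall>n' n. 1 \<le> n' \<and> n \<le> n' \<longrightarrow> inV (\<gamma> n n')) \<and>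
     (\<forall>n' n. 1 \<le> n' \<and> n \<le> n' \<longrightarrow> precV (maxV (histos n n')) (\<gamma> n n')) \<and>
     (\<forall>n' n m. 1 \<le> n' \<and> n \<le> m \<and> m \<le> n' \<longrightarrow> precV (\<gamma> n n') (\<gamma> m n'))"

end

theory Submission
  imports Defs
begin

text \<open>The activation histogram of a layer in RL(n, n') is the histogram of the sign patterns
  of n' affine functions on R^n, i.e. of the cells of an arrangement of n' hyperplanes, so all its
  tail sums are bounded by the number of cells.  That number is at most
  \<open>\<Sum>i\<le>n. n' choose i\<close> by deletion-restriction: a new hyperplane splits only the cells it
  meets, and these are cells of the arrangement induced on the hyperplane, which lives in one
  dimension less.  Histograms vanish above n' and the tails of maxV are the maxima of the tails,
  so their maximum is dominated by that bound placed at index n'; monotonicity in n is that of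
  the partial binomial sums.\<close>

definition preact ::
    "nat set \<Rightarrow> (nat \<Rightarrow> nat \<Rightarrow> real) \<Rightarrow> (nat \<Rightarrow> real) \<Rightarrow> nat \<Rightarrow> (nat \<Rightarrow> real) \<Rightarrow> real"
  where "preact K W b i x = (\<Sum>k\<in>K. x k * W i k) + b i"

definition sign_pattern :: "nat set \<Rightarrow> nat \<Rightarrow> (nat \<Rightarrow> nat \<Rightarrow> real) \<Rightarrow> (nat \<Rightarrow> real)
    \<Rightarrow> (nat \<Rightarrow> real) \<Rightarrow> nat \<Rightarrow> nat"
  where "sign_pattern K m W b x = (\<lambda>i. if i < m \<and> 0 < preact K W b i x then 1 else 0)"

text \<open>Only the coordinates in K enter, so \<open>sign_patterns K m W b\<close> is the set of cells of the
  arrangement of the m hyperplanes \<open>preact K W b i x = 0\<close> (i < m) in R^K.\<close>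

definition sign_patterns ::
    "nat set \<Rightarrow> nat \<Rightarrow> (nat \<Rightarrow> nat \<Rightarrow> real) \<Rightarrow> (nat \<Rightarrow> real) \<Rightarrow> (nat \<Rightarrow> nat) set"
  where "sign_patterns K m W b = range (sign_pattern K m W b)"

lemma finite_sign_patterns: "finite (sign_patterns K m W b)"
proof (rule finite_subset)
  show "sign_patterns K m W b \<subseteq> (\<lambda>S i. if i \<in> S then 1 else 0) ` Pow {..<m}"
    unfolding sign_patterns_def sign_pattern_def
    by (auto intro!: image_eqI[where x = "{i. i < m \<and> 0 < preact K W b i _}"])
qed simp

lemma preact_convex_comb:
  "preact K W b i (\<lambda>k. (1 - t) * x k + t * y k) = (1 - t) * preact K W b i x + t * preact K W b i y"
  by (simp add: preact_def algebra_simps sum.distrib sum_subtractf sum_distrib_left)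

lemma sign_pattern_convex_comb:
  assumes eq: "sign_pattern K m W b x = sign_pattern K m W b y" and "0 \<le> t" "t \<le> 1"
  shows "sign_pattern K m W b (\<lambda>k. (1 - t) * x k + t * y k) = sign_pattern K m W b x"
proof
  fix i
  let ?p = "preact K W b i"
  show "sign_pattern K m W b (\<lambda>k. (1 - t) * x k + t * y k) i = sign_pattern K m W b x i"
  proof (cases "i < m")
    case True
    then have same_sign: "0 < ?p x \<longleftrightarrow> 0 < ?p y"
      using fun_cong[OF eq, of i] by (auto simp: sign_pattern_def split: if_splits)
    have "0 < (1 - t) * ?p x + t * ?p y \<longleftrightarrow> 0 < ?p x"
    proof (cases "0 < ?p x")
      case True
      then have "(1 - t) * - ?p x + t * - ?p y < 0"
        using same_sign \<open>0 \<le> t\<close> \<open>t \<le> 1\<close> by (intro convex_bound_lt) auto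
      with True show ?thesis by simp
    next
      case False
      then have "(1 - t) * ?p x + t * ?p y \<le> 0"
        using same_sign \<open>0 \<le> t\<close> \<open>t \<le> 1\<close> by (intro convex_bound_le) auto
      with False show ?thesis by simp
    qed
    then show ?thesis by (simp add: sign_pattern_def preact_convex_comb)
  qed (simp add: sign_pattern_def)
qed

lemma sign_patterns_both_sides_subset_hyperplane:
  "sign_pattern K m W b ` {x. preact K W b j x \<le> 0} \<inter> sign_pattern K m W b ` {y. 0 < preact K W b j y}
     \<subseteq> sign_pattern K m W b ` {z. preact K W b j z = 0}"
proof
  let ?p = "preact K W b j"
  fix q assume "q \<in> sign_pattern K m W b ` {x. ?p x \<le> 0} \<inter> sign_pattern K m W b ` {y. 0 < ?p y}"
  then obtain x y where x: "?p x \<le> 0" "q = sign_pattern K m W b x"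
    and y: "0 < ?p y" "q = sign_pattern K m W b y"
    by blast
  define t where "t = ?p x / (?p x - ?p y)"
  have "0 \<le> t" "t \<le> 1"
    using x y by (auto simp: t_def divide_nonpos_neg)
  define z where "z = (\<lambda>k. (1 - t) * x k + t * y k)"
  have "q = sign_pattern K m W b z"
    unfolding z_def x(2) using x(2) y(2) \<open>0 \<le> t\<close> \<open>t \<le> 1\<close>
    by (simp add: sign_pattern_convex_comb)
  moreover have "?p z = 0"
    using x y unfolding z_def preact_convex_comb t_def by (simp add: field_simps)
  ultimately show "q \<in> sign_pattern K m W b ` {z. ?p z = 0}"
    by blast
qed

lemma preact_on_hyperplane_eliminate:
  assumes "finite K" "k0 \<in> K" "W m k0 \<noteq> 0" and on_hyperplane: "preact K W b m z = 0"
  shows "preact K W b i z = preact (K - {k0}) (\<lambda>i k. W i k - W m k * W i k0 / W m k0)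
                                             (\<lambda>i. b i - b m * W i k0 / W m k0) i z"
proof -
  let ?c = "\<lambda>i. W i k0 / W m k0"
  have split: "preact K W b i z = z k0 * W i k0 + preact (K - {k0}) W b i z" for i
    using assms(1,2) by (simp add: preact_def sum.remove)
  have "z k0 * W m k0 = - preact (K - {k0}) W b m z"
    using on_hyperplane split[of m] by simp
  then have "z k0 = - preact (K - {k0}) W b m z / W m k0"
    using \<open>W m k0 \<noteq> 0\<close> by (simp add: field_simps)
  then have "z k0 * W i k0 = - ?c i * preact (K - {k0}) W b m z"
    by simp
  moreover have "preact (K - {k0}) (\<lambda>i k. W i k - W m k * ?c i) (\<lambda>i. b i - b m * ?c i) i z
      = preact (K - {k0}) W b i z - ?c i * preact (K - {k0}) W b m z"
    by (simp add: preact_def sum_subtractf sum_distrib_left algebra_simps)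
  ultimately show ?thesis
    by (simp add: split[of i])
qed

lemma sign_patterns_on_hyperplane:
  assumes "finite K" "k0 \<in> K" "W m k0 \<noteq> 0"
  shows "\<exists>W' b'. sign_pattern K m W b ` {z. preact K W b m z = 0} \<subseteq> sign_patterns (K - {k0}) m W' b'"
proof (intro exI subsetI)
  fix q assume "q \<in> sign_pattern K m W b ` {z. preact K W b m z = 0}"
  then obtain z where z: "preact K W b m z = 0" "q = sign_pattern K m W b z" by blast
  then have "q = sign_pattern (K - {k0}) m (\<lambda>i k. W i k - W m k * W i k0 / W m k0)
                   (\<lambda>i. b i - b m * W i k0 / W m k0) z"
    using preact_on_hyperplane_eliminate[OF assms z(1)] by (simp add: sign_pattern_def)
  then show "q \<in> sign_patterns (K - {k0}) m (\<lambda>i k. W i k - W m k * W i k0 / W m k0)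
                   (\<lambda>i. b i - b m * W i k0 / W m k0)"
    by (simp add: sign_patterns_def)
qed

lemma sign_pattern_Suc:
  "sign_pattern K (Suc m) W b x
     = (if 0 < preact K W b m x then (sign_pattern K m W b x)(m := 1) else sign_pattern K m W b x)"
  by (auto simp: sign_pattern_def less_Suc_eq)

lemma card_sign_patterns_Suc_le:
  "card (sign_patterns K (Suc m) W b) \<le> card (sign_patterns K m W b)
     + card (sign_pattern K m W b ` {x. preact K W b m x \<le> 0}
             \<inter> sign_pattern K m W b ` {x. 0 < preact K W b m x})"
  (is "_ \<le> _ + card (?N \<inter> ?P)")
proof -
  have sub: "?N \<union> ?P = sign_patterns K m W b"
    by (force simp: sign_patterns_def)
  then have fin: "finite ?N" "finite ?P"
    using finite_sign_patterns[of K m W b] by (metis finite_Un)+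
  have "sign_patterns K (Suc m) W b = ?N \<union> (\<lambda>q. q(m := 1)) ` ?P"
    by (force simp: sign_patterns_def sign_pattern_Suc)
  then have "card (sign_patterns K (Suc m) W b) \<le> card ?N + card ((\<lambda>q. q(m := 1)) ` ?P)"
    by (simp only: card_Un_le)
  also have "\<dots> \<le> card ?N + card ?P"
    using card_image_le[OF fin(2)] by simp
  also have "\<dots> = card (?N \<union> ?P) + card (?N \<inter> ?P)"
    using fin by (rule card_Un_Int)
  finally show ?thesis
    unfolding sub .
qed

lemma sum_choose_Suc_row:
  "(\<Sum>i\<le>Suc e. Suc m choose i) = (\<Sum>i\<le>Suc e. m choose i) + (\<Sum>i\<le>e. m choose i)"
  by (induction e) (simp_all add: binomial_Suc_Suc)

lemma sum_choose_mono_row: "(\<Sum>i\<le>c. m choose i) \<le> (\<Sum>i\<le>c. Suc m choose i)"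
proof (rule sum_mono)
  show "m choose i \<le> Suc m choose i" for i
    by (cases i) (simp_all add: binomial_Suc_Suc)
qed

lemma card_sign_patterns_le:
  "finite K \<Longrightarrow> card (sign_patterns K m W b) \<le> (\<Sum>i\<le>card K. m choose i)"
proof (induction m arbitrary: K W b)
  case 0
  have "sign_patterns K 0 W b = {\<lambda>i. 0}"
    by (auto simp: sign_patterns_def sign_pattern_def)
  then show ?case
    by (simp add: sum.atMost_shift)
next
  case (Suc m)
  let ?N = "sign_pattern K m W b ` {x. preact K W b m x \<le> 0}"
  let ?P = "sign_pattern K m W b ` {x. 0 < preact K W b m x}"
  have IH: "card (sign_patterns K m W b) \<le> (\<Sum>i\<le>card K. m choose i)"
    using Suc.prems by (rule Suc.IH)
  show ?case
  proof (cases "\<forall>k\<in>K. W m k = 0")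
    case True
    then have "?N \<inter> ?P = {}"
      by (auto simp: preact_def)
    then show ?thesis
      using card_sign_patterns_Suc_le[of K m W b] IH sum_choose_mono_row[where c = "card K" and m = m] by simp
  next
    case False
    then obtain k0 where k0: "k0 \<in> K" "W m k0 \<noteq> 0"
      by blast
    then obtain W' b' where
      "sign_pattern K m W b ` {z. preact K W b m z = 0} \<subseteq> sign_patterns (K - {k0}) m W' b'"
      using sign_patterns_on_hyperplane[where W = W and m = m and b = b, OF Suc.prems k0] by blast
    then have "card (?N \<inter> ?P) \<le> card (sign_patterns (K - {k0}) m W' b')"
      by (intro card_mono[OF finite_sign_patterns] order_trans[OF sign_patterns_both_sides_subset_hyperplane])
    also have "\<dots> \<le> (\<Sum>i\<le>card (K - {k0}). m choose i)"
      using Suc.prems by (intro Suc.IH) simp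
    finally have "card (?N \<inter> ?P) \<le> (\<Sum>i\<le>card (K - {k0}). m choose i)" .
    moreover have "card K = Suc (card (K - {k0}))"
      using card_Suc_Diff1[OF Suc.prems k0(1)] by simp
    ultimately show ?thesis
      using card_sign_patterns_Suc_le[of K m W b] IH sum_choose_Suc_row[where e = "card (K - {k0})" and m = m] by simp
  qed
qed

lemma act_patterns_relu_layer:
  "act_patterns n n' (relu_layer n n' W b) = sign_patterns {..<n} n' W b"
proof -
  have act: "act_pattern n' (relu_layer n n' W b) x = sign_pattern {..<n} n' W b x" for x
    by (auto simp: act_pattern_def relu_layer_def sign_pattern_def preact_def less_max_iff_disj)
  have mask: "sign_pattern {..<n} n' W b x = sign_pattern {..<n} n' W b (\<lambda>k. if k < n then x k else 0)"
    for x by (simp add: sign_pattern_def preact_def)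
  have "act_patterns n n' (relu_layer n n' W b) = sign_pattern {..<n} n' W b ` {x. \<forall>k\<ge>n. x k = 0}"
    by (auto simp: act_patterns_def act)
  also have "\<dots> = sign_patterns {..<n} n' W b"
    unfolding sign_patterns_def
  proof (intro subset_antisym subsetI)
    fix q assume "q \<in> range (sign_pattern {..<n} n' W b)"
    then obtain x where "q = sign_pattern {..<n} n' W b x"
      by blast
    then show "q \<in> sign_pattern {..<n} n' W b ` {x. \<forall>k\<ge>n. x k = 0}"
      using mask[of x] by auto
  qed auto
  finally show ?thesis .
qed

lemma sum_sign_pattern_le: "(\<Sum>i<m. sign_pattern K m W b x i) \<le> m"
  using sum_bounded_above[of "{..<m}" "sign_pattern K m W b x" 1] by (simp add: sign_pattern_def)

lemma histo_eq_0_above: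
  assumes "\<And>s. s \<in> S \<Longrightarrow> (\<Sum>i<n'. s i) \<le> n'" "n' < j"
  shows "histo n' S j = 0"
proof -
  have "{s \<in> S. (\<Sum>i<n'. s i) = j} = {}"
    using assms by force
  then show ?thesis
    unfolding histo_def by (metis card.empty)
qed

lemma tailV_histo_le_card:
  assumes "finite S"
  shows "tailV (histo n' S) J \<le> card S"
proof (cases "finite {j. J \<le> j \<and> histo n' S j \<noteq> 0}")
  case True
  have "tailV (histo n' S) J
      = card (\<Union>j\<in>{j. J \<le> j \<and> histo n' S j \<noteq> 0}. {s \<in> S. (\<Sum>i<n'. s i) = j})"
    unfolding tailV_def histo_def using True assms by (subst card_UN_disjoint) auto
  also have "\<dots> \<le> card S"
    using assms by (intro card_mono) auto
  finally show ?thesis .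
qed (simp add: tailV_def)

lemma tailV_eq_sum:
  assumes "\<And>j. N < j \<Longrightarrow> v j = 0"
  shows "tailV v J = (\<Sum>j=J..N. v j)"
proof -
  have "{j. J \<le> j \<and> v j \<noteq> 0} \<subseteq> {J..N}"
    using assms by (auto simp: not_less[symmetric])
  then show ?thesis
    unfolding tailV_def by (rule sum.mono_neutral_left[OF finite_atLeastAtMost]) auto
qed

lemma tailV_eq_0_above:
  assumes "\<And>j. N < j \<Longrightarrow> v j = 0" "N < J"
  shows "tailV v J = 0"
  using assms by (simp add: tailV_eq_sum[of N])

lemma sum_telescope_antimono_nat:
  fixes M :: "nat \<Rightarrow> nat"
  assumes "antimono M"
  shows "(\<Sum>j=J..N. M j - M (Suc j)) = M J - M (Suc N)"
proof (cases "J \<le> N")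
  case True
  then show ?thesis
  proof (induction N rule: dec_induct)
    case (step N)
    have "M (Suc (Suc N)) \<le> M (Suc N)" "M (Suc N) \<le> M J"
      using antimonoD[OF assms] step.hyps by auto
    moreover have "(\<Sum>j=J..Suc N. M j - M (Suc j))
        = (\<Sum>j=J..N. M j - M (Suc j)) + (M (Suc N) - M (Suc (Suc N)))"
      using step.hyps by simp
    ultimately show ?case
      using step.IH by simp
  qed simp
next
  case False
  then show ?thesis
    using antimonoD[OF assms, of "Suc N" J] by simp
qed

lemma tailV_maxV:
  assumes "F \<noteq> {}" and vanish: "\<And>v j. v \<in> F \<Longrightarrow> N < j \<Longrightarrow> v j = 0"
    and fin: "\<And>j. finite ((\<lambda>v. tailV v j) ` F)"
  shows "tailV (maxV F) J = Max ((\<lambda>v. tailV v J) ` F)"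
proof -
  define M where "M j = Max ((\<lambda>v. tailV v j) ` F)" for j
  have "antimono M"
  proof (rule antimonoI)
    fix i j :: nat assume "i \<le> j"
    have "tailV v j \<le> tailV v i" if "v \<in> F" for v
      using \<open>i \<le> j\<close> by (simp add: tailV_eq_sum[OF vanish[OF that]] sum_mono2)
    then show "M j \<le> M i"
      unfolding M_def using assms(1) fin by (subst Max_le_iff) (auto intro: order_trans[OF _ Max_ge])
  qed
  have M_vanish: "M j = 0" if "N < j" for j
  proof -
    have "tailV v j = 0" if "v \<in> F" for v
      using vanish[OF that] \<open>N < j\<close> by (rule tailV_eq_0_above)
    then have "(\<lambda>v. tailV v j) ` F = {0}"
      using assms(1) by auto
    then show ?thesis
      by (simp add: M_def)
  qed
  have "maxV F j = M j - M (Suc j)" for j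
    by (simp add: maxV_def M_def)
  then have "tailV (maxV F) J = (\<Sum>j=J..N. M j - M (Suc j))"
    using M_vanish by (subst tailV_eq_sum[of N]) simp_all
  also have "\<dots> = M J"
    using sum_telescope_antimono_nat[OF \<open>antimono M\<close>] M_vanish by simp
  finally show ?thesis
    by (simp add: M_def)
qed

lemma tailV_scaled_unitV: "tailV (\<lambda>j. c * unitV N j) J = (if J \<le> N then c else 0)"
  by (simp add: tailV_eq_sum[of N] unitV_def sum_distrib_left[symmetric])

lemma precV_maxV_scaled_unitV:
  assumes "F \<noteq> {}" and vanish: "\<And>v j. v \<in> F \<Longrightarrow> N < j \<Longrightarrow> v j = 0"
    and bounded: "\<And>v J. v \<in> F \<Longrightarrow> tailV v J \<le> C"
  shows "precV (maxV F) (\<lambda>j. C * unitV N j)"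
  unfolding precV_def tailV_scaled_unitV
proof
  fix J
  have fin: "finite ((\<lambda>v. tailV v j) ` F)" for j
    by (rule finite_subset[of _ "{..C}"]) (auto intro: bounded)
  have "tailV v J \<le> (if J \<le> N then C else 0)" if "v \<in> F" for v
    using bounded[OF that] tailV_eq_0_above[OF vanish[OF that]] by simp
  then have "Max ((\<lambda>v. tailV v J) ` F) \<le> (if J \<le> N then C else 0)"
    using fin assms(1) by (intro Max.boundedI) auto
  then show "tailV (maxV F) J \<le> (if J \<le> N then C else 0)"
    by (metis tailV_maxV assms(1) vanish fin)
qed

lemma histos_nonempty: "histos n n' \<noteq> {}"
  by (auto simp: histos_def RL_def)

lemma histos_pos:
  assumes "0 < n"
  shows "histos n n' = {histo n' (sign_patterns {..<n} n' W b) | W b. True}"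
proof -
  have "histos n n' = {histo n' (act_patterns n n' (relu_layer n n' W b)) | W b. True}"
    using assms unfolding histos_def RL_def by (simp, blast)
  then show ?thesis
    by (simp add: act_patterns_relu_layer)
qed

lemma histos_vanish_above:
  assumes "v \<in> histos n n'" "n' < j"
  shows "v j = 0"
proof (cases "n = 0")
  case True
  then show ?thesis
    using assms by (simp add: histos_def unitV_def)
next
  case False
  then obtain W b where "v = histo n' (sign_patterns {..<n} n' W b)"
    using assms(1) by (auto simp: histos_pos)
  then show ?thesis
    using assms(2) by (auto simp: sign_patterns_def sum_sign_pattern_le intro: histo_eq_0_above)
qed

lemma tailV_histos_le:
  assumes "v \<in> histos n n'"
  shows "tailV v J \<le> (\<Sum>i\<le>n. n' choose i)"
proof (cases "n = 0")
  case True
  then show ?thesis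
    using assms tailV_scaled_unitV[of 1 0 J] by (simp add: histos_def)
next
  case False
  then obtain W b where "v = histo n' (sign_patterns {..<n} n' W b)"
    using assms by (auto simp: histos_pos)
  then have "tailV v J \<le> card (sign_patterns {..<n} n' W b)"
    by (simp add: tailV_histo_le_card finite_sign_patterns)
  also have "\<dots> \<le> (\<Sum>i\<le>n. n' choose i)"
    using card_sign_patterns_le[of "{..<n}" n' W b] by simp
  finally show ?thesis .
qed

theorem mainTheorem8:
  shows "in_Gamma (\<lambda>n n' j. (\<Sum>i\<le>n. n' choose i) * unitV n' j)"
proof -
  let ?C = "\<lambda>n n'. \<Sum>i\<le>n. n' choose i"
  have "inV (\<lambda>j. ?C n n' * unitV n' j)" for n n'
    unfolding inV_def unitV_def by (rule finite_subset[of _ "{n'}"]) auto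
  moreover have "precV (maxV (histos n n')) (\<lambda>j. ?C n n' * unitV n' j)" for n n'
    using histos_nonempty histos_vanish_above tailV_histos_le by (rule precV_maxV_scaled_unitV)
  moreover have "precV (\<lambda>j. ?C n n' * unitV n' j) (\<lambda>j. ?C m n' * unitV n' j)" if "n \<le> m" for n m n'
    using that by (simp add: precV_def tailV_scaled_unitV sum_mono2)
  ultimately show ?thesis
    unfolding in_Gamma_def by blast
qed

end
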